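(* For all integers $n,f,k$ with $1\le f\le n-1$ and $1\le k\le n$, the task $(k+1)\text{-TAg}(n+1,f)$ is $C^*$-reducible to $k\text{-TAg}(n,f)$. Specifically, with $\Pi=\{1,\dots,n+1\}$ and $\Pi_i=\Pi\setminus\{i\}$, the following algorithm solves $(k+1)\text{-TAg}(\Pi,f)$ using the oracles $\mathcal O.k\text{-TAg}(\Pi_l,f)$, $l=1,\dots,n+1$: each process $i$, for $l=1,\dots,n+1$ with $l\ne i$ in this order, queries $\mathcal O.k\text{-TAg}(\Pi_l,f)$ with its initial value $v_i$, receives answer $w_l$ and sends $(l,w_l)$ to all; it then waits until it knows $w_l$ for all $l\in\{1,\dots,n+1\}$ and decides $\max_l w_l$.
   Context: Model: a finite set of processes runs an asynchronous algorithm communicating by reliable message passing with unbounded delays and speeds; processes fail only by crashing. Time is $\mathcal T=\mathbb N$; a failure pattern $F$ for $\Pi$ is a nondecreasing map $\mathcal T\to2^\Pi$, $Faulty(F)=\bigcup_tF(t)$. A binary agreement problem $P$ for $\Pi$ maps each $(F,\vec V)$, $\vec V\in\{0,1\}^\Pi$, to a nonempty $P(F,\vec V)\subseteq\{0,1\}$; a task is $T=(P,f)$. An algorithm solves $T$ if in every run with $|Faulty(F)|\le f$ and initial values $\vec V$: every correct process eventually decides, decisions are irrevocable, no two processes decide differently, and decisions lie in $P(F,\vec V)$. $k\text{-TAg}_\Pi(F,\vec V)=\{0\}$ if at least $k$ entries of $\vec V$ are $0$; $=\{1\}$ if $\vec V$ is all-ones and $|Faulty(F)|\le k-1$; $=\{0,1\}$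 otherwise; $k\text{-TAg}(\Pi,f)=(k\text{-TAg}_\Pi,f)$; $k\text{-TAg}(n,f)=k\text{-TAg}(\{1,\dots,n\},f)$. Oracles: for $T=(P,f)$ on process set $\Pi'$, $\mathcal O.T$ is a black box with consultants $\Pi'$; its history is a sequence of successive consultations, in each of which every consultant may submit at most one query in $\{0,1\}$ and the oracle returns a common response $d$ with $d\in P(F,\vec V)$ for every $\vec V$ extending the partial query vector (the oracle may use the whole failure pattern restricted to $\Pi'$, including future crashes), and every correct querier gets the response whenever at least $|\Pi'|-f$ consultants query; $\mathcal O.T$ is the most general such oracle. $C^*$-reduction: $T_1\le_{C^*}T_2$ if there is an algorithm solving $T_1$ whose processes may additionally consult any finite collection of oracles $\mathcal O.T_2^{(j)}$, each $T_2^{(j)}$ being a copy of $T_2$ whose processes are renamed into (a subset of) the processes of $T_1$. *)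

theory Defs
  imports Main
begin

(* Binary values: False encodes 0, True encodes 1 (so max on bool is max on {0,1}). *)

definition procs :: "nat \<Rightarrow> nat set" where
  "procs N = {1..N}"

definition failure_pattern :: "nat set \<Rightarrow> (nat \<Rightarrow> nat set) \<Rightarrow> bool" where
  "failure_pattern P F \<longleftrightarrow> (\<forall>t t'. t \<le> t' \<longrightarrow> F t \<subseteq> F t') \<and> (\<forall>t. F t \<subseteq> P)"

definition Faulty :: "(nat \<Rightarrow> nat set) \<Rightarrow> nat set" where
  "Faulty F = (\<Union>t. F t)"

definition TAg :: "nat \<Rightarrow> nat set \<Rightarrow> (nat \<Rightarrow> nat set) \<Rightarrow> (nat \<Rightarrow> bool) \<Rightarrow> bool set" where
  "TAg k P F V =
     (if k \<le> card {i \<in> P. V i = False} then {False}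
      else if (\<forall>i\<in>P. V i = True) \<and> card (Faulty F) \<le> k - 1 then {True}
      else UNIV)"

record cfg =
  pc       :: "nat \<Rightarrow> nat"                 (* number of oracle answers already processed by process i *)
  waiting  :: "nat \<Rightarrow> bool"                (* process i has a pending oracle query *)
  know     :: "nat \<Rightarrow> nat \<Rightarrow> bool option"   (* know i l = known value w_l at process i *)
  dec      :: "nat \<Rightarrow> bool option"
  queried  :: "nat \<Rightarrow> nat \<Rightarrow> bool option"   (* queried l i = query submitted by i to oracle l *)
  oans     :: "nat \<Rightarrow> nat \<Rightarrow> bool option"   (* oans l i = response of oracle l delivered to i *)
  transit  :: "(nat \<times> nat \<times> nat \<times> bool) set"  (* messages (sender, receiver, l, w_l) in transit *)

definition init_cfg :: cfg where
  "init_cfg = \<lparr> pc = (\<lambda>_. 0), waiting = (\<lambda>_. False), know = (\<lambda>_ _. None), dec = (\<lambda>_. None),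
               queried = (\<lambda>_ _. None), oans = (\<lambda>_ _. None), transit = {} \<rparr>"

datatype event =
    PStep nat
  | Deliver "nat \<times> nat \<times> nat \<times> bool"
  | OAns nat nat                         (* oracle l returns its response to querier i *)

definition qorder :: "nat \<Rightarrow> nat \<Rightarrow> nat list" where
  "qorder N i = filter (\<lambda>l. l \<noteq> i) [1..<N+1]"

(* One transition. N = number of processes, V = initial values, d l = common response of oracle l. *)
definition step :: "nat \<Rightarrow> (nat \<Rightarrow> bool) \<Rightarrow> (nat \<Rightarrow> bool) \<Rightarrow> event \<Rightarrow> cfg \<Rightarrow> cfg" where
  "step N V d e c = (case e of
     PStep i \<Rightarrow>
       (if dec c i \<noteq> None then c
        else if \<not> waiting c i then
          (if pc c i < N - 1 then
             (let l = qorder N i ! pc c i in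
              c\<lparr> queried := (queried c)(l := (queried c l)(i := Some (V i))),
                 waiting := (waiting c)(i := True) \<rparr>)
           else if (\<forall>l\<in>procs N. know c i l \<noteq> None) then
             c\<lparr> dec := (dec c)(i := Some (Max ((\<lambda>l. the (know c i l)) ` procs N))) \<rparr>
           else c)
        else
          (let l = qorder N i ! pc c i in
           (case oans c l i of
              None \<Rightarrow> c
            | Some w \<Rightarrow>
                c\<lparr> know := (know c)(i := (know c i)(l := Some w)),
                   transit := transit c \<union> {(i, j, l, w) | j. j \<in> procs N},
                   waiting := (waiting c)(i := False),
                   pc := (pc c)(i := Suc (pc c i)) \<rparr>)))
   | Deliver m \<Rightarrow>
       (case m of (s, r, l, w) \<Rightarrow>
          if m \<in> transit c then
            c\<lparr> transit := transit c - {m},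
               know := (know c)(r := (know c r)(l :=
                         (case know c r l of None \<Rightarrow> Some w | Some u \<Rightarrow> Some u))) \<rparr>
          else c)
   | OAns l i \<Rightarrow>
       (if queried c l i \<noteq> None \<and> oans c l i = None
        then c\<lparr> oans := (oans c)(l := (oans c l)(i := Some (d l))) \<rparr>
        else c))"

definition admissible_run ::
  "nat \<Rightarrow> nat \<Rightarrow> nat \<Rightarrow> (nat \<Rightarrow> nat set) \<Rightarrow> (nat \<Rightarrow> bool) \<Rightarrow> (nat \<Rightarrow> bool)
   \<Rightarrow> (nat \<Rightarrow> cfg) \<Rightarrow> (nat \<Rightarrow> event) \<Rightarrow> bool" where
  "admissible_run N k f F V d C ev \<longleftrightarrow>
     failure_pattern (procs N) F
   \<and> C 0 = init_cfg
   \<and> (\<forall>t. C (Suc t) = step N V d (ev t) (C t))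
   \<comment> \<open>only alive processes of the system take steps\<close>
   \<and> (\<forall>t i. ev t = PStep i \<longrightarrow> i \<in> procs N \<and> i \<notin> F t)
   \<comment> \<open>correct processes take infinitely many steps\<close>
   \<and> (\<forall>i \<in> procs N - Faulty F. \<forall>t. \<exists>t'\<ge>t. ev t' = PStep i)
   \<comment> \<open>reliable channels: messages to correct processes are eventually delivered\<close>
   \<and> (\<forall>t s r l w. (s, r, l, w) \<in> transit (C t) \<and> r \<in> procs N - Faulty F
          \<longrightarrow> (\<exists>t'\<ge>t. ev t' = Deliver (s, r, l, w)))
   \<comment> \<open>oracle safety: the common response of oracle l is valid for every input vector
       extending its (partial) query vector, w.r.t. F restricted to Pi_l\<close>
   \<and> (\<forall>l \<in> procs N. \<forall>V'.
          (\<forall>i \<in> procs N - {l}. \<forall>v. (\<exists>t. queried (C t) l i = Some v) \<longrightarrow> V' i = v)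
          \<longrightarrow> d l \<in> TAg k (procs N - {l}) (\<lambda>t. F t \<inter> (procs N - {l})) V')
   \<comment> \<open>oracle liveness: if at least |Pi_l| - f consultants query, every correct querier gets the response\<close>
   \<and> (\<forall>l \<in> procs N.
          card {i \<in> procs N - {l}. \<exists>t. queried (C t) l i \<noteq> None} \<ge> card (procs N - {l}) - f
          \<longrightarrow> (\<forall>i \<in> procs N - {l} - Faulty F. (\<exists>t. queried (C t) l i \<noteq> None)
                  \<longrightarrow> (\<exists>t. oans (C t) l i \<noteq> None)))"

end

theory Submission
  imports Defs
begin

(* Oracle l is consulted by everybody except process l, so it answers with respect to the initial
   values of Pi_l. If at least k + 1 initial values are 0, each Pi_l still contains k zeros and
   every oracle answers 0, hence so does the maximum. If all values are 1 and at most k processes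
   crash, the oracle indexed by a faulty process sees at most k - 1 crashes and must answer 1, hence
   the maximum is 1.
   For termination, all processes query the oracles in increasing order, so by induction on l every
   correct process reaches oracle l; then at least |Pi_l| - f consultants query it and it answers.
   The one response a process does not obtain itself, w_i, is forwarded to it by some other correct
   process, which exists because f <= n - 1. *)

lemma Faulty_restrict: "Faulty (\<lambda>t. F t \<inter> P) = Faulty F \<inter> P"
  by (auto simp: Faulty_def)

lemma Max_in_TAg_Suc:
  assumes "finite P" and "P \<noteq> {}" and "Faulty F \<subseteq> P" and "1 \<le> k"
    and valid: "\<And>l. l \<in> P \<Longrightarrow> d l \<in> TAg k (P - {l}) (\<lambda>t. F t \<inter> (P - {l})) V"
  shows "Max (d ` P) \<in> TAg (k + 1) P F V"
proof (cases "k + 1 \<le> card {i \<in> P. V i = False}")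
  case True
  have "d l = False" if l: "l \<in> P" for l
  proof -
    have "card {i \<in> P. V i = False} - 1 \<le> card ({i \<in> P. V i = False} - {l})"
      using diff_card_le_card_Diff[of "{l}" "{i \<in> P. V i = False}"] by simp
    also have "{i \<in> P. V i = False} - {l} = {i \<in> P - {l}. V i = False}"
      by auto
    finally have "k \<le> card {i \<in> P - {l}. V i = False}"
      using True by simp
    then show ?thesis
      using valid[OF l] by (simp add: TAg_def)
  qed
  then have "d ` P = {False}"
    using \<open>P \<noteq> {}\<close> by auto
  with True show ?thesis
    by (simp add: TAg_def)
next
  case no_zeros: False
  show ?thesis
  proof (cases "(\<forall>i\<in>P. V i) \<and> card (Faulty F) \<le> k")
    case True
    obtain l where l: "l \<in> P" and l_faulty: "Faulty F \<noteq> {} \<Longrightarrow> l \<in> Faulty F"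
      using \<open>P \<noteq> {}\<close> \<open>Faulty F \<subseteq> P\<close> by blast
    have "finite (Faulty F)"
      using \<open>finite P\<close> \<open>Faulty F \<subseteq> P\<close> finite_subset by blast
    have "card (Faulty F \<inter> (P - {l})) \<le> k - 1"
    proof (cases "Faulty F = {}")
      case False
      then have "l \<in> Faulty F" and "Faulty F \<inter> (P - {l}) = Faulty F - {l}"
        using l_faulty \<open>Faulty F \<subseteq> P\<close> by auto
      with \<open>finite (Faulty F)\<close> True show ?thesis
        by (simp add: diff_le_mono)
    qed simp
    moreover have no_zeros_left: "{i \<in> P - {l}. V i = False} = {}"
      using True by auto
    ultimately have "TAg k (P - {l}) (\<lambda>t. F t \<inter> (P - {l})) V = {True}"
      using True \<open>1 \<le> k\<close> unfolding TAg_def no_zeros_left by (simp add: Faulty_restrict)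
    then have "d l = True"
      using valid[OF l] by simp
    moreover have "d l \<le> Max (d ` P)"
      using \<open>finite P\<close> l by (intro Max_ge) auto
    ultimately have "Max (d ` P) = True"
      by simp
    with no_zeros True show ?thesis
      by (simp add: TAg_def)
  next
    case False
    then have "\<not> ((\<forall>i\<in>P. V i = True) \<and> card (Faulty F) \<le> k + 1 - 1)"
      by simp
    with no_zeros have "TAg (k + 1) P F V = UNIV"
      unfolding TAg_def by (simp only: if_False)
    then show ?thesis
      by simp
  qed
qed

lemma finite_procs: "finite (procs N)"
  by (simp add: procs_def)

lemma set_qorder: "set (qorder N i) = procs N - {i}"
  by (auto simp: qorder_def procs_def)

lemma length_qorder:
  assumes "i \<in> procs N"
  shows "length (qorder N i) = N - 1"
proof -
  have "length (qorder N i) = card (procs N - {i})"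
    by (metis set_qorder distinct_card distinct_filter distinct_upt qorder_def)
  with assms show ?thesis
    by (simp add: procs_def)
qed

lemma qorder_Suc: "qorder (Suc l) i = qorder l i @ (if i = Suc l then [] else [Suc l])"
  by (simp add: qorder_def)

lemma qorder_append: "l \<le> N \<Longrightarrow> qorder N i = qorder l i @ filter (\<lambda>l'. l' \<noteq> i) [l + 1..<N + 1]"
  using upt_add_eq_append[of 1 "l + 1" "N - l"] by (simp add: qorder_def)

lemma length_qorder_less: "i \<noteq> Suc l \<Longrightarrow> Suc l \<le> N \<Longrightarrow> length (qorder l i) < length (qorder N i)"
  using qorder_append[of "Suc l" N i] by (simp add: qorder_Suc)

lemma nth_qorder_length: "i \<noteq> Suc l \<Longrightarrow> Suc l \<le> N \<Longrightarrow> qorder N i ! length (qorder l i) = Suc l"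
  using qorder_append[of "Suc l" N i] by (simp add: qorder_Suc nth_append)

(* Phase 2 p: process i is about to query the p-th oracle of qorder N i; phase 2 p + 1: it waits
   for that oracle's response. *)
definition phase :: "cfg \<Rightarrow> nat \<Rightarrow> nat" where
  "phase c i = 2 * pc c i + (if waiting c i then 1 else 0)"

lemma phase_eq_double: "phase c i = 2 * p \<longleftrightarrow> pc c i = p \<and> \<not> waiting c i"
  by (simp add: phase_def) presburger

lemma phase_eq_Suc_double: "phase c i = Suc (2 * p) \<longleftrightarrow> pc c i = p \<and> waiting c i"
  by (simp add: phase_def) presburger

lemma phase_step_mono: "phase c i \<le> phase (step N V d e c) i"
  by (auto simp: phase_def step_def Let_def split: event.split option.split if_splits)

lemma know_step_mono: "know c i l \<noteq> None \<Longrightarrow> know (step N V d e c) i l \<noteq> None"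
  by (auto simp: step_def Let_def split: event.split option.split if_splits)

lemma oans_step_mono: "oans c l i \<noteq> None \<Longrightarrow> oans (step N V d e c) l i \<noteq> None"
  by (auto simp: step_def Let_def split: event.split option.split if_splits)

lemma dec_step_stable: "dec c i = Some v \<Longrightarrow> dec (step N V d e c) i = Some v"
  by (auto simp: step_def Let_def split: event.split option.split if_splits)

lemma phase_step_query:
  "dec c i = None \<Longrightarrow> \<not> waiting c i \<Longrightarrow> pc c i < N - 1 \<Longrightarrow>
   phase (step N V d (PStep i) c) i = Suc (phase c i)"
  by (simp add: step_def Let_def phase_def)

lemma pc_step_answer:
  "dec c i = None \<Longrightarrow> waiting c i \<Longrightarrow> oans c (qorder N i ! pc c i) i \<noteq> None \<Longrightarrow>
   pc (step N V d (PStep i) c) i = Suc (pc c i)"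
  by (auto simp: step_def Let_def)

lemma dec_step_decide:
  "dec c i = None \<Longrightarrow> \<not> waiting c i \<Longrightarrow> \<not> pc c i < N - 1 \<Longrightarrow> \<forall>l\<in>procs N. know c i l \<noteq> None \<Longrightarrow>
   dec (step N V d (PStep i) c) i \<noteq> None"
  by (simp add: step_def)

lemma know_step_deliver:
  "(s, r, l, w) \<in> transit c \<Longrightarrow> know (step N V d (Deliver (s, r, l, w)) c) r l \<noteq> None"
  by (simp add: step_def split: option.split)

lemma transit_or_known_step:
  "(s, r, l, w) \<in> transit c \<or> know c r l \<noteq> None \<Longrightarrow>
   (s, r, l, w) \<in> transit (step N V d e c) \<or> know (step N V d e c) r l \<noteq> None"
  by (auto simp: step_def Let_def split: event.split option.split if_splits)

definition truthful :: "nat \<Rightarrow> (nat \<Rightarrow> bool) \<Rightarrow> (nat \<Rightarrow> bool) \<Rightarrow> cfg \<Rightarrow> bool" where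
  "truthful N V d c \<longleftrightarrow>
     (\<forall>l i. queried c l i \<in> {None, Some (V i)})
   \<and> (\<forall>l i. oans c l i \<in> {None, Some (d l)})
   \<and> (\<forall>s r l w. (s, r, l, w) \<in> transit c \<longrightarrow> w = d l)
   \<and> (\<forall>i l. know c i l \<in> {None, Some (d l)})
   \<and> (\<forall>i. dec c i \<in> {None, Some (Max (d ` procs N))})"

lemma truthful_init: "truthful N V d init_cfg"
  by (simp add: truthful_def init_cfg_def)

lemma step_PStep_cases:
  fixes N i :: nat and V d :: "nat \<Rightarrow> bool" and c :: cfg
  defines "l \<equiv> qorder N i ! pc c i"
  obtains (idle) "step N V d (PStep i) c = c"
  | (query) "dec c i = None" "\<not> waiting c i" "pc c i < N - 1"
      "step N V d (PStep i) c =
         c\<lparr>queried := (queried c)(l := (queried c l)(i := Some (V i))), waiting := (waiting c)(i := True)\<rparr>"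
  | (decide) "dec c i = None" "\<not> waiting c i" "\<not> pc c i < N - 1" "\<forall>l\<in>procs N. know c i l \<noteq> None"
      "step N V d (PStep i) c = c\<lparr>dec := (dec c)(i := Some (Max ((\<lambda>l. the (know c i l)) ` procs N)))\<rparr>"
  | (answer) w where "dec c i = None" "waiting c i" "oans c l i = Some w"
      "step N V d (PStep i) c =
         c\<lparr>know := (know c)(i := (know c i)(l := Some w)),
           transit := transit c \<union> {(i, j, l, w) | j. j \<in> procs N},
           waiting := (waiting c)(i := False), pc := (pc c)(i := Suc (pc c i))\<rparr>"
proof (cases "dec c i = None")
  case False
  then show thesis
    by (intro idle) (auto simp: step_def)
next
  case undecided: True
  show thesis
  proof (cases "waiting c i")
    case False
    consider "pc c i < N - 1" | "\<not> pc c i < N - 1" "\<forall>l\<in>procs N. know c i l \<noteq> None"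
      | "\<not> pc c i < N - 1" "\<not> (\<forall>l\<in>procs N. know c i l \<noteq> None)"
      by blast
    then show thesis
    proof cases
      case 1
      with undecided False show thesis
        by (intro query) (simp_all add: step_def l_def Let_def)
    next
      case 2
      with undecided False show thesis
        by (intro decide) (simp_all add: step_def)
    next
      case 3
      with undecided False show thesis
        by (intro idle) (auto simp: step_def)
    qed
  next
    case True
    show thesis
    proof (cases "oans c l i")
      case None
      with undecided True show thesis
        by (intro idle) (simp add: step_def l_def Let_def)
    next
      case (Some w)
      with undecided True show thesis
        by (intro answer) (simp_all add: step_def l_def Let_def)
    qed
  qed
qed

lemma truthful_PStep:
  assumes "truthful N V d c"
  shows "truthful N V d (step N V d (PStep i) c)"
proof (cases rule: step_PStep_cases[where N = N and i = i and V = V and d = d and c = c])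
  case idle
  with assms show ?thesis
    by simp
next
  case query
  with assms show ?thesis
    unfolding truthful_def by simp
next
  case decide
  have "(\<lambda>l. the (know c i l)) ` procs N = d ` procs N"
  proof (rule image_cong[OF refl])
    fix l
    assume "l \<in> procs N"
    moreover have "know c i l \<in> {None, Some (d l)}"
      using assms unfolding truthful_def by blast
    ultimately show "the (know c i l) = d l"
      using decide(4) by auto
  qed
  with decide(5) assms show ?thesis
    unfolding truthful_def by simp
next
  case (answer w)
  have "oans c (qorder N i ! pc c i) i \<in> {None, Some (d (qorder N i ! pc c i))}"
    using assms unfolding truthful_def by blast
  with answer(3) have "w = d (qorder N i ! pc c i)"
    by simp
  with answer(4) assms show ?thesis
    unfolding truthful_def by simp
qed

lemma truthful_Deliver:
  assumes "truthful N V d c"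
  shows "truthful N V d (step N V d (Deliver m) c)"
proof (cases "m \<in> transit c")
  case True
  obtain s r l w where m: "m = (s, r, l, w)"
    by (cases m)
  have "w = d l" and "know c r l \<in> {None, Some (d l)}"
    using True m assms unfolding truthful_def by blast+
  with True m have "step N V d (Deliver m) c =
      c\<lparr>transit := transit c - {m}, know := (know c)(r := (know c r)(l := Some (d l)))\<rparr>"
    by (auto simp: step_def)
  with assms show ?thesis
    by (auto simp: truthful_def)
next
  case False
  with assms show ?thesis
    by (cases m) (simp add: step_def)
qed

lemma truthful_OAns:
  assumes "truthful N V d c"
  shows "truthful N V d (step N V d (OAns l i) c)"
  using assms by (auto simp: truthful_def step_def)

lemma truthful_step: "truthful N V d c \<Longrightarrow> truthful N V d (step N V d e c)"
  by (cases e) (simp_all add: truthful_PStep truthful_Deliver truthful_OAns)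

definition local_progress :: "nat \<Rightarrow> cfg \<Rightarrow> bool" where
  "local_progress N c \<longleftrightarrow>
     (\<forall>i. pc c i \<le> N - 1)
   \<and> (\<forall>i. waiting c i \<longrightarrow> pc c i < N - 1 \<and> queried c (qorder N i ! pc c i) i \<noteq> None)
   \<and> (\<forall>i. dec c i \<noteq> None \<longrightarrow> pc c i = N - 1 \<and> \<not> waiting c i)
   \<and> (\<forall>i p. p < pc c i \<longrightarrow> queried c (qorder N i ! p) i \<noteq> None \<and> know c i (qorder N i ! p) \<noteq> None)"

lemma local_progress_init: "local_progress N init_cfg"
  by (simp add: local_progress_def init_cfg_def)

lemma local_progress_PStep:
  assumes "local_progress N c"
  shows "local_progress N (step N V d (PStep i) c)"
proof (cases rule: step_PStep_cases[where N = N and i = i and V = V and d = d and c = c])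
  case idle
  with assms show ?thesis
    by simp
next
  case query
  with assms show ?thesis
    unfolding local_progress_def by (auto; metis)
next
  case decide
  with assms show ?thesis
    unfolding local_progress_def by (auto simp: le_less)
next
  case (answer w)
  with assms show ?thesis
    unfolding local_progress_def by (auto simp: less_Suc_eq)
qed

lemma local_progress_Deliver:
  assumes "local_progress N c"
  shows "local_progress N (step N V d (Deliver m) c)"
  using assms by (cases m) (auto simp: local_progress_def step_def split: option.split)

lemma local_progress_OAns:
  assumes "local_progress N c"
  shows "local_progress N (step N V d (OAns l i) c)"
  using assms by (simp add: local_progress_def step_def)

lemma local_progress_step: "local_progress N c \<Longrightarrow> local_progress N (step N V d e c)"
  by (cases e) (simp_all add: local_progress_PStep local_progress_Deliver local_progress_OAns)

lemma undecided_if_pc_less: "local_progress N c \<Longrightarrow> pc c i < N - 1 \<Longrightarrow> dec c i = None"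
  by (auto simp: local_progress_def)

lemma knows_responses_when_done:
  assumes "local_progress N c" and "pc c i = N - 1" and "i \<in> procs N" and "l \<in> procs N - {i}"
  shows "know c i l \<noteq> None"
proof -
  obtain p where "p < length (qorder N i)" and "qorder N i ! p = l"
    using assms(4) by (metis set_qorder in_set_conv_nth)
  with assms show ?thesis
    by (auto simp: local_progress_def length_qorder)
qed

definition forwarded :: "nat \<Rightarrow> cfg \<Rightarrow> bool" where
  "forwarded N c \<longleftrightarrow>
     (\<forall>s p r. p < pc c s \<longrightarrow> r \<in> procs N \<longrightarrow>
        know c r (qorder N s ! p) \<noteq> None \<or> (\<exists>w. (s, r, qorder N s ! p, w) \<in> transit c))"

lemma forwarded_init: "forwarded N init_cfg"
  by (simp add: forwarded_def init_cfg_def)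

lemma forwarded_PStep:
  assumes "forwarded N c"
  shows "forwarded N (step N V d (PStep i) c)"
proof (cases rule: step_PStep_cases[where N = N and i = i and V = V and d = d and c = c])
  case (answer w)
  with assms show ?thesis
    unfolding forwarded_def by (auto simp: less_Suc_eq)
qed (use assms in \<open>simp_all add: forwarded_def\<close>)

lemma forwarded_Deliver:
  assumes "forwarded N c"
  shows "forwarded N (step N V d (Deliver m) c)"
  using assms by (cases m) (auto simp: forwarded_def step_def split: option.split)

lemma forwarded_OAns:
  assumes "forwarded N c"
  shows "forwarded N (step N V d (OAns l i) c)"
  using assms by (simp add: forwarded_def step_def)

lemma forwarded_step: "forwarded N c \<Longrightarrow> forwarded N (step N V d e c)"
  by (cases e) (simp_all add: forwarded_PStep forwarded_Deliver forwarded_OAns)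

locale tag_run =
  fixes N k f :: nat and F :: "nat \<Rightarrow> nat set" and V d :: "nat \<Rightarrow> bool"
    and C :: "nat \<Rightarrow> cfg" and ev :: "nat \<Rightarrow> event"
  assumes admissible: "admissible_run N k f F V d C ev"
begin

lemma run_init: "C 0 = init_cfg"
  using admissible by (simp add: admissible_run_def)

lemma run_step: "C (Suc t) = step N V d (ev t) (C t)"
  using admissible by (simp add: admissible_run_def)

lemma Faulty_subset: "Faulty F \<subseteq> procs N"
  using admissible by (auto simp: admissible_run_def failure_pattern_def Faulty_def)

lemma fair_steps: "i \<in> procs N - Faulty F \<Longrightarrow> \<exists>t'\<ge>t. ev t' = PStep i"
  using admissible by (simp add: admissible_run_def)

lemma reliable_delivery:
  "(s, r, l, w) \<in> transit (C t) \<Longrightarrow> r \<in> procs N - Faulty F \<Longrightarrow> \<exists>t'\<ge>t. ev t' = Deliver (s, r, l, w)"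
  using admissible unfolding admissible_run_def by (elim conjE) blast

lemma oracle_safety:
  "l \<in> procs N \<Longrightarrow> (\<forall>i \<in> procs N - {l}. \<forall>v. (\<exists>t. queried (C t) l i = Some v) \<longrightarrow> V' i = v) \<Longrightarrow>
   d l \<in> TAg k (procs N - {l}) (\<lambda>t. F t \<inter> (procs N - {l})) V'"
  using admissible unfolding admissible_run_def by (elim conjE) blast

lemma oracle_liveness:
  "l \<in> procs N \<Longrightarrow>
   card (procs N - {l}) - f \<le> card {i \<in> procs N - {l}. \<exists>t. queried (C t) l i \<noteq> None} \<Longrightarrow>
   i \<in> procs N - {l} - Faulty F \<Longrightarrow> \<exists>t. queried (C t) l i \<noteq> None \<Longrightarrow> \<exists>t. oans (C t) l i \<noteq> None"
  using admissible unfolding admissible_run_def by (elim conjE) blast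

lemma run_stable:
  assumes "\<And>c e. P c \<Longrightarrow> P (step N V d e c)" and "P (C t)" and "t \<le> t'"
  shows "P (C t')"
  using assms(3,2) by (induction t' rule: dec_induct) (simp_all add: run_step assms(1))

lemma run_invariant:
  assumes "P init_cfg" and "\<And>c e. P c \<Longrightarrow> P (step N V d e c)"
  shows "P (C t)"
  using run_stable[of P 0 t] assms by (simp add: run_init)

lemma phase_le: "t \<le> t' \<Longrightarrow> phase (C t) i \<le> phase (C t') i"
  by (rule run_stable[where P = "\<lambda>c. phase (C t) i \<le> phase c i"]) (auto intro: le_trans[OF _ phase_step_mono])

lemma pc_le: "t \<le> t' \<Longrightarrow> pc (C t) i \<le> pc (C t') i"
  using phase_le[of t t' i] by (simp add: phase_def split: if_splits)

lemma know_le: "t \<le> t' \<Longrightarrow> know (C t) i l \<noteq> None \<Longrightarrow> know (C t') i l \<noteq> None"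
  by (rule run_stable[where P = "\<lambda>c. know c i l \<noteq> None"]) (simp_all add: know_step_mono)

lemma oans_le: "t \<le> t' \<Longrightarrow> oans (C t) l i \<noteq> None \<Longrightarrow> oans (C t') l i \<noteq> None"
  by (rule run_stable[where P = "\<lambda>c. oans c l i \<noteq> None"]) (simp_all add: oans_step_mono)

lemma dec_le: "t \<le> t' \<Longrightarrow> dec (C t) i = Some v \<Longrightarrow> dec (C t') i = Some v"
  by (rule run_stable[where P = "\<lambda>c. dec c i = Some v"]) (simp_all add: dec_step_stable)

lemma truthful_run: "truthful N V d (C t)"
  by (rule run_invariant) (simp_all add: truthful_init truthful_step)

lemma local_progress_run: "local_progress N (C t)"
  by (rule run_invariant) (simp_all add: local_progress_init local_progress_step)

lemma forwarded_run: "forwarded N (C t)"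
  by (rule run_invariant) (simp_all add: forwarded_init forwarded_step)

lemma pc_bounded: "pc (C t) i \<le> N - 1"
  using local_progress_run[of t] by (simp add: local_progress_def)

lemma decision_eq_Max:
  assumes "dec (C t) i = Some v"
  shows "v = Max (d ` procs N)"
proof -
  have "dec (C t) i \<in> {None, Some (Max (d ` procs N))}"
    using truthful_run[of t] unfolding truthful_def by blast
  with assms show ?thesis
    by simp
qed

lemma response_valid:
  assumes "l \<in> procs N"
  shows "d l \<in> TAg k (procs N - {l}) (\<lambda>t. F t \<inter> (procs N - {l})) V"
proof (rule oracle_safety[OF assms], intro ballI allI impI)
  fix i v
  assume "\<exists>t. queried (C t) l i = Some v"
  then obtain t where "queried (C t) l i = Some v" ..
  moreover have "queried (C t) l i \<in> {None, Some (V i)}"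
    using truthful_run[of t] unfolding truthful_def by blast
  ultimately show "V i = v"
    by simp
qed

lemma decision_agreement: "dec (C t) i = Some v \<Longrightarrow> dec (C t') j = Some w \<Longrightarrow> v = w"
  using decision_eq_Max by blast

lemma decision_valid:
  assumes "1 \<le> k" and "0 < N" and "dec (C t) i = Some v"
  shows "v \<in> TAg (k + 1) (procs N) F V"
proof -
  have "procs N \<noteq> {}"
    using \<open>0 < N\<close> by (auto simp: procs_def)
  with assms show ?thesis
    using Max_in_TAg_Suc[OF finite_procs _ Faulty_subset _ response_valid] decision_eq_Max[OF assms(3)]
    by simp
qed

lemma eventually_delivered:
  assumes "(s, r, l, w) \<in> transit (C t)" and r: "r \<in> procs N - Faulty F"
  shows "\<exists>t'. know (C t') r l \<noteq> None"
proof -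
  obtain t' where "t \<le> t'" and deliver: "ev t' = Deliver (s, r, l, w)"
    using reliable_delivery[OF assms] by blast
  have "(s, r, l, w) \<in> transit (C t') \<or> know (C t') r l \<noteq> None"
    by (rule run_stable[OF _ _ \<open>t \<le> t'\<close>]) (use assms(1) transit_or_known_step in auto)
  then show ?thesis
  proof
    assume "(s, r, l, w) \<in> transit (C t')"
    then have "know (C (Suc t')) r l \<noteq> None"
      using know_step_deliver deliver by (simp add: run_step)
    then show ?thesis ..
  qed blast
qed

lemma phase_eventually_exceeds:
  assumes i: "i \<in> procs N - Faulty F" and "m \<le> phase (C t) i"
    and progress: "\<And>t'. t \<le> t' \<Longrightarrow> phase (C t') i = m \<Longrightarrow> ev t' = PStep i \<Longrightarrow> m < phase (C (Suc t')) i"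
  shows "\<exists>t'. m < phase (C t') i"
proof -
  obtain t' where "t \<le> t'" and stepping: "ev t' = PStep i"
    using fair_steps[OF i] by blast
  have "m \<le> phase (C t') i"
    using assms(2) phase_le[OF \<open>t \<le> t'\<close>] by (rule le_trans)
  show ?thesis
  proof (cases "phase (C t') i = m")
    case True
    then show ?thesis
      using progress[OF \<open>t \<le> t'\<close> _ stepping] by blast
  next
    case False
    with \<open>m \<le> phase (C t') i\<close> show ?thesis
      by (intro exI[of _ t']) simp
  qed
qed

lemma eventually_waiting:
  assumes i: "i \<in> procs N - Faulty F" and "p < N - 1" and "p \<le> pc (C t) i"
  shows "\<exists>t'. 2 * p < phase (C t') i"
proof (rule phase_eventually_exceeds[OF i])
  show "2 * p \<le> phase (C t) i"
    using assms(3) by (simp add: phase_def)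
next
  fix t'
  assume phase: "phase (C t') i = 2 * p" and stepping: "ev t' = PStep i"
  then have "pc (C t') i = p" and "\<not> waiting (C t') i"
    by (simp_all add: phase_eq_double)
  moreover from this have "dec (C t') i = None"
    using undecided_if_pc_less[OF local_progress_run] \<open>p < N - 1\<close> by simp
  ultimately have "phase (C (Suc t')) i = Suc (phase (C t') i)"
    using phase_step_query \<open>p < N - 1\<close> stepping by (simp add: run_step)
  with phase show "2 * p < phase (C (Suc t')) i"
    by simp
qed

lemma eventually_queries:
  assumes i: "i \<in> procs N - Faulty F" and "p < N - 1" and "p \<le> pc (C t) i"
  shows "\<exists>t'. queried (C t') (qorder N i ! p) i \<noteq> None"
proof -
  obtain t' where "2 * p < phase (C t') i"
    using eventually_waiting[OF assms] by blast
  then have "p < pc (C t') i \<or> pc (C t') i = p \<and> waiting (C t') i"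
    by (auto simp: phase_def split: if_splits)
  then show ?thesis
    using local_progress_run[of t'] unfolding local_progress_def by blast
qed

lemma eventually_advances:
  assumes i: "i \<in> procs N - Faulty F" and p: "p < N - 1" and "p \<le> pc (C t) i"
    and answered: "oans (C ta) (qorder N i ! p) i \<noteq> None"
  shows "\<exists>t'. p < pc (C t') i"
proof -
  obtain t1 where "2 * p < phase (C t1) i"
    using eventually_waiting[OF assms(1-3)] by blast
  then have "Suc (2 * p) \<le> phase (C (max t1 ta)) i"
    using phase_le[of t1 "max t1 ta" i] by simp
  then have "\<exists>t'. Suc (2 * p) < phase (C t') i"
  proof (rule phase_eventually_exceeds[OF i])
    fix t'
    assume "max t1 ta \<le> t'" and "phase (C t') i = Suc (2 * p)" and stepping: "ev t' = PStep i"
    then have "pc (C t') i = p" and "waiting (C t') i"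
      by (simp_all add: phase_eq_Suc_double)
    moreover from this have "dec (C t') i = None"
      using undecided_if_pc_less[OF local_progress_run] p by simp
    moreover have "oans (C t') (qorder N i ! p) i \<noteq> None"
      using oans_le[OF _ answered] \<open>max t1 ta \<le> t'\<close> by simp
    ultimately have "pc (C (Suc t')) i = Suc p"
      using pc_step_answer stepping by (simp add: run_step)
    then show "Suc (2 * p) < phase (C (Suc t')) i"
      by (simp add: phase_def)
  qed
  then obtain t' where "Suc (2 * p) < phase (C t') i" ..
  then have "p < pc (C t') i"
    by (simp add: phase_def split: if_splits)
  then show ?thesis ..
qed

end

locale resilient_tag_run = tag_run +
  assumes few_faulty: "card (Faulty F) \<le> f" and enough_processes: "f + 2 \<le> N"
begin

lemma finite_Faulty: "finite (Faulty F)"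
  using Faulty_subset finite_procs by (rule finite_subset)

lemma oracle_answers:
  assumes l: "l \<in> procs N"
    and queries: "\<And>j. j \<in> procs N - {l} - Faulty F \<Longrightarrow> \<exists>t. queried (C t) l j \<noteq> None"
    and i: "i \<in> procs N - {l} - Faulty F"
  shows "\<exists>t. oans (C t) l i \<noteq> None"
proof (rule oracle_liveness[OF l _ i queries[OF i]])
  have "card (procs N - {l}) - f \<le> card (procs N - {l}) - card (Faulty F)"
    using few_faulty by simp
  also have "\<dots> \<le> card (procs N - {l} - Faulty F)"
    using diff_card_le_card_Diff[OF finite_Faulty] by simp
  also have "\<dots> \<le> card {j \<in> procs N - {l}. \<exists>t. queried (C t) l j \<noteq> None}"
    using queries finite_procs by (intro card_mono) auto
  finally show "card (procs N - {l}) - f \<le> card {j \<in> procs N - {l}. \<exists>t. queried (C t) l j \<noteq> None}" .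
qed

(* length (qorder l i) is the number of oracles among 1, ..., l that process i consults. *)
lemma reaches_oracle: "l \<le> N \<Longrightarrow> i \<in> procs N - Faulty F \<Longrightarrow> \<exists>t. length (qorder l i) \<le> pc (C t) i"
proof (induction l arbitrary: i)
  case 0
  then show ?case
    by (simp add: qorder_def)
next
  case (Suc l)
  show ?case
  proof (cases "i = Suc l")
    case True
    with Suc show ?thesis
      by (simp add: qorder_Suc)
  next
    case False
    have position: "length (qorder l j) < N - 1" "qorder N j ! length (qorder l j) = Suc l"
      if "j \<noteq> Suc l" and "j \<in> procs N" for j
      using that Suc.prems(1) length_qorder_less[of j l N] nth_qorder_length[of j l N] length_qorder[of j N]
      by simp_all
    have "\<exists>t. queried (C t) (Suc l) j \<noteq> None" if j: "j \<in> procs N - {Suc l} - Faulty F" for j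
    proof -
      obtain t where "length (qorder l j) \<le> pc (C t) j"
        using Suc.IH[of j] Suc.prems(1) j by auto
      then have "\<exists>t'. queried (C t') (qorder N j ! length (qorder l j)) j \<noteq> None"
        using eventually_queries[of j] position(1)[of j] j by blast
      with position(2)[of j] j show ?thesis
        by auto
    qed
    moreover have "Suc l \<in> procs N"
      using Suc.prems(1) by (simp add: procs_def)
    ultimately obtain ta where answered: "oans (C ta) (Suc l) i \<noteq> None"
      using oracle_answers Suc.prems(2) False by blast
    obtain t where "length (qorder l i) \<le> pc (C t) i"
      using Suc.IH[of i] Suc.prems by auto
    moreover have "length (qorder l i) < N - 1" and "qorder N i ! length (qorder l i) = Suc l"
      using position[OF False] Suc.prems(2) by auto
    ultimately have "\<exists>t'. length (qorder l i) < pc (C t') i"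
      using eventually_advances[OF Suc.prems(2), of "length (qorder l i)" t ta] answered by simp
    then obtain t' where "length (qorder l i) < pc (C t') i" ..
    with False show ?thesis
      by (intro exI[of _ t']) (simp add: qorder_Suc)
  qed
qed

lemma completes_queries:
  assumes "i \<in> procs N - Faulty F"
  shows "\<exists>t. pc (C t) i = N - 1"
proof -
  obtain t where "length (qorder N i) \<le> pc (C t) i"
    using reaches_oracle[OF order_refl assms] by blast
  moreover have "pc (C t) i \<le> N - 1"
    by (rule pc_bounded)
  ultimately show ?thesis
    using assms length_qorder by (intro exI[of _ t]) simp
qed

lemma exists_other_correct:
  assumes "i \<in> procs N"
  shows "\<exists>j \<in> procs N - Faulty F. j \<noteq> i"
proof -
  have "N - f \<le> card (procs N - Faulty F)"
    using diff_card_le_card_Diff[OF finite_Faulty, of "procs N"] few_faulty by (simp add: procs_def)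
  moreover have "card (procs N - Faulty F) - 1 \<le> card (procs N - Faulty F - {i})"
    using diff_card_le_card_Diff[of "{i}" "procs N - Faulty F"] by simp
  ultimately have "card (procs N - Faulty F - {i}) \<noteq> 0"
    using enough_processes by linarith
  then obtain j where "j \<in> procs N - Faulty F - {i}"
    by (metis card.empty ex_in_conv)
  then show ?thesis
    by blast
qed

lemma eventually_knows_own_response:
  assumes i: "i \<in> procs N - Faulty F"
  shows "\<exists>t. know (C t) i i \<noteq> None"
proof -
  obtain j where j: "j \<in> procs N - Faulty F" "j \<noteq> i"
    using exists_other_correct i by blast
  obtain t where "pc (C t) j = N - 1"
    using completes_queries[OF j(1)] by blast
  moreover have "i \<in> set (qorder N j)"
    using i j by (simp add: set_qorder)
  then obtain p where "p < length (qorder N j)" and response: "qorder N j ! p = i"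
    by (metis in_set_conv_nth)
  ultimately have "p < pc (C t) j"
    using j length_qorder by simp
  with i have "know (C t) i i \<noteq> None \<or> (\<exists>w. (j, i, i, w) \<in> transit (C t))"
    using forwarded_run[of t] unfolding forwarded_def response[symmetric] by blast
  then show ?thesis
    using eventually_delivered i by blast
qed

lemma eventually_decides:
  assumes i: "i \<in> procs N - Faulty F"
  shows "\<exists>t v. dec (C t) i = Some v"
proof -
  obtain t1 where t1: "pc (C t1) i = N - 1"
    using completes_queries[OF i] by blast
  obtain t2 where t2: "know (C t2) i i \<noteq> None"
    using eventually_knows_own_response[OF i] by blast
  obtain t where "max t1 t2 \<le> t" and stepping: "ev t = PStep i"
    using fair_steps[OF i] by blast
  show ?thesis
  proof (cases "dec (C t) i")
    case None
    have "pc (C t) i = N - 1"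
      using pc_le[of t1 t i] \<open>max t1 t2 \<le> t\<close> t1 pc_bounded[of t i] by simp
    moreover from this have "\<not> waiting (C t) i"
      using local_progress_run[of t] by (auto simp: local_progress_def)
    moreover have "know (C t) i l \<noteq> None" if "l \<in> procs N" for l
    proof (cases "l = i")
      case True
      with t2 know_le[of t2 t i i] \<open>max t1 t2 \<le> t\<close> show ?thesis
        by simp
    next
      case False
      with that i t1 have "know (C t1) i l \<noteq> None"
        using knows_responses_when_done[OF local_progress_run] by blast
      with know_le[of t1 t i l] \<open>max t1 t2 \<le> t\<close> show ?thesis
        by simp
    qed
    ultimately have "dec (C (Suc t)) i \<noteq> None"
      using dec_step_decide[of "C t" i N] None stepping by (simp add: run_step)
    then show ?thesis
      by blast
  qed blast
qed

end

theorem mainTheorem7: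
  fixes n f k :: nat
  assumes "1 \<le> f" and "f \<le> n - 1" and "1 \<le> k" and "k \<le> n"
  shows "\<forall>F V d C ev. admissible_run (n + 1) k f F V d C ev \<and> card (Faulty F) \<le> f \<longrightarrow>
           (\<forall>i \<in> procs (n + 1) - Faulty F. \<exists>t v. dec (C t) i = Some v)
         \<and> (\<forall>i t t' v. t \<le> t' \<and> dec (C t) i = Some v \<longrightarrow> dec (C t') i = Some v)
         \<and> (\<forall>i j t t' v w. dec (C t) i = Some v \<and> dec (C t') j = Some w \<longrightarrow> v = w)
         \<and> (\<forall>i t v. dec (C t) i = Some v \<longrightarrow> v \<in> TAg (k + 1) (procs (n + 1)) F V)"
proof (intro allI impI)
  fix F V d C ev
  assume "admissible_run (n + 1) k f F V d C ev \<and> card (Faulty F) \<le> f"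
  with assms interpret resilient_tag_run "n + 1" k f F V d C ev
    by unfold_locales auto
  have "0 < n + 1"
    by simp
  show "(\<forall>i \<in> procs (n + 1) - Faulty F. \<exists>t v. dec (C t) i = Some v)
      \<and> (\<forall>i t t' v. t \<le> t' \<and> dec (C t) i = Some v \<longrightarrow> dec (C t') i = Some v)
      \<and> (\<forall>i j t t' v w. dec (C t) i = Some v \<and> dec (C t') j = Some w \<longrightarrow> v = w)
      \<and> (\<forall>i t v. dec (C t) i = Some v \<longrightarrow> v \<in> TAg (k + 1) (procs (n + 1)) F V)"
    using eventually_decides dec_le decision_agreement decision_valid[OF \<open>1 \<le> k\<close> \<open>0 < n + 1\<close>]
    by (intro conjI) fast+
qed

end
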